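(* Let $m\ge 2$, $p$ a prime, and let $G=G_1\circ G_2\circ\dots\circ G_m$ be a finite group which is a central product of pairwise isomorphic extra-special subgroups $G_i$ of order $p^3$. Suppose $G$ admits an automorphism $\alpha$ of order $m$, with $m$ coprime to $p$, which cyclically permutes the factors $G_1,\dots,G_m$ and satisfies $G'\le C_G(\alpha)$. Then $[G,\alpha]$ is extra-special and has index $p^2$ in $G$.
   Context: A finite $p$-group $P$ is extra-special if $P'=Z(P)$ has order $p$. A group $G$ is a central product $H\circ K$ of subgroups $H,K$ if $G=\langle H,K\rangle$, $[H,K]=1$ and $H\cap K=Z(H)=Z(K)$; iterated central products are defined accordingly. $C_G(\alpha)$ is the fixed-point subgroup of $\alpha$, and $[G,\alpha]$ is the subgroup generated by all $g^{-1}g^{\alpha}$, $g\in G$. *)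

theory Defs
  imports "HOL-Algebra.Algebra"
begin

definition grp_center :: "('a, 'b) monoid_scheme \<Rightarrow> 'a set" where
  "grp_center G = {z \<in> carrier G. \<forall>g \<in> carrier G. z \<otimes>\<^bsub>G\<^esub> g = g \<otimes>\<^bsub>G\<^esub> z}"

definition extra_special :: "nat \<Rightarrow> ('a, 'b) monoid_scheme \<Rightarrow> bool" where
  "extra_special p P \<longleftrightarrow> group P \<and> finite (carrier P) \<and> (\<exists>n. card (carrier P) = p ^ n)
     \<and> derived P (carrier P) = grp_center P \<and> card (grp_center P) = p"

definition iterated_central_product :: "('a, 'b) monoid_scheme \<Rightarrow> (nat \<Rightarrow> 'a set) \<Rightarrow> nat \<Rightarrow> bool" where
  "iterated_central_product G Gs m \<longleftrightarrow>
     (\<forall>i<m. subgroup (Gs i) G) \<and>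
     generate G (\<Union>i<m. Gs i) = carrier G \<and>
     (\<forall>k. 1 \<le> k \<and> k < m \<longrightarrow>
        (let H = generate G (\<Union>i<k. Gs i) in
          (\<forall>h\<in>H. \<forall>x\<in>Gs k. h \<otimes>\<^bsub>G\<^esub> x = x \<otimes>\<^bsub>G\<^esub> h) \<and>
          H \<inter> Gs k = grp_center (G\<lparr>carrier := H\<rparr>) \<and>
          H \<inter> Gs k = grp_center (G\<lparr>carrier := Gs k\<rparr>)))"

definition fixed_points :: "('a, 'b) monoid_scheme \<Rightarrow> ('a \<Rightarrow> 'a) \<Rightarrow> 'a set" where
  "fixed_points G \<alpha> = {g \<in> carrier G. \<alpha> g = g}"

definition comm_aut :: "('a, 'b) monoid_scheme \<Rightarrow> ('a \<Rightarrow> 'a) \<Rightarrow> 'a set" where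
  "comm_aut G \<alpha> = generate G {inv\<^bsub>G\<^esub> g \<otimes>\<^bsub>G\<^esub> \<alpha> g | g. g \<in> carrier G}"

definition aut_order_is :: "('a, 'b) monoid_scheme \<Rightarrow> ('a \<Rightarrow> 'a) \<Rightarrow> nat \<Rightarrow> bool" where
  "aut_order_is G \<alpha> m \<longleftrightarrow> 0 < m \<and> (\<forall>x \<in> carrier G. (\<alpha> ^^ m) x = x)
     \<and> (\<forall>k. 0 < k \<and> k < m \<longrightarrow> (\<exists>x \<in> carrier G. (\<alpha> ^^ k) x \<noteq> x))"

end

theory Submission
  imports Defs
begin

text \<open>
  Let \<open>Z\<close> be the common centre of the factors \<open>Gs i\<close>: it has order \<open>p\<close>, is central in \<open>G\<close>,
  contains all commutators of \<open>G\<close> and is the centre of \<open>G\<close>. Put \<open>N = [G, \<alpha>]\<close>, which is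
  normal. Since \<open>\<alpha>\<close> carries every factor onto \<open>Gs 0\<close> and \<open>x\<inverse> \<alpha>\<^sup>k(x) \<in> N\<close>, we get
  \<open>G = N (Gs 0)\<close>. Because \<open>[G, G]\<close> is fixed by \<open>\<alpha>\<close>, every \<open>\<alpha>\<close>-fixed element centralises \<open>N\<close>;
  in particular so does the norm \<open>y \<alpha>(y) \<dots> \<alpha>\<^sup>m\<^sup>-\<^sup>1(y)\<close> of \<open>y \<in> Gs 0\<close>, whose factors other
  than \<open>y\<close> lie in the other factors of the central product. This forces \<open>N \<inter> Gs 0 \<subseteq> Z\<close>, and a
  commutator computation with \<open>x\<inverse> \<alpha>(x)\<close> gives \<open>Z \<subseteq> N\<close>; counting then yields \<open>|G| = p\<^sup>2 |N|\<close>.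
  For \<open>c\<close> in the centre of \<open>N\<close>, \<open>g \<mapsto> [c, g]\<close> is a homomorphism \<open>G \<rightarrow> Z\<close> that is trivial on
  \<open>N\<close>, hence \<open>\<alpha>\<close>-invariant; evaluated on the norm of \<open>y\<close> it gives \<open>[c, y]\<^sup>m = 1\<close>, so
  \<open>[c, y] = 1\<close> as \<open>m\<close> is prime to \<open>p\<close>. Thus the centre of \<open>N\<close> is \<open>Z\<close>, and \<open>N' = Z\<close> because
  \<open>N\<close> is too large to be abelian.
\<close>

section \<open>Commutators and products of subgroups\<close>

definition commutator :: "('a, 'b) monoid_scheme \<Rightarrow> 'a \<Rightarrow> 'a \<Rightarrow> 'a" where
  "commutator G a b = a \<otimes>\<^bsub>G\<^esub> b \<otimes>\<^bsub>G\<^esub> inv\<^bsub>G\<^esub> a \<otimes>\<^bsub>G\<^esub> inv\<^bsub>G\<^esub> b"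

abbreviation center_of :: "('a, 'b) monoid_scheme \<Rightarrow> 'a set \<Rightarrow> 'a set" where
  "center_of G H \<equiv> grp_center (G\<lparr>carrier := H\<rparr>)"

lemma center_of_eq:
  fixes G (structure)
  shows "center_of G H = {z \<in> H. \<forall>g\<in>H. z \<otimes> g = g \<otimes> z}"
  by (simp add: grp_center_def)

context group begin

lemma inv_mult_cancel_left [simp]: "x \<in> carrier G \<Longrightarrow> y \<in> carrier G \<Longrightarrow> inv x \<otimes> (x \<otimes> y) = y"
  by (simp add: m_assoc [symmetric])

lemma mult_inv_cancel_left [simp]: "x \<in> carrier G \<Longrightarrow> y \<in> carrier G \<Longrightarrow> x \<otimes> (inv x \<otimes> y) = y"
  by (simp add: m_assoc [symmetric])

lemma commutator_closed [simp]: "a \<in> carrier G \<Longrightarrow> b \<in> carrier G \<Longrightarrow> commutator G a b \<in> carrier G"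
  by (simp add: commutator_def)

lemma commutator_mult_right:
  assumes "g \<in> carrier G" "a \<in> carrier G" "b \<in> carrier G"
  shows "commutator G g (a \<otimes> b) = commutator G g a \<otimes> (a \<otimes> commutator G g b \<otimes> inv a)"
  using assms by (simp add: commutator_def m_assoc inv_mult_group)

lemma commutator_inv_right:
  assumes "g \<in> carrier G" "h \<in> carrier G"
  shows "commutator G g (inv h) = inv h \<otimes> inv (commutator G g h) \<otimes> h"
  using assms by (simp add: commutator_def m_assoc inv_mult_group)

lemma commutator_swap:
  assumes "g \<in> carrier G" "h \<in> carrier G"
  shows "commutator G h g = inv (commutator G g h)"
  using assms by (simp add: commutator_def m_assoc inv_mult_group)

lemma commutator_eq_one_iff:
  assumes "g \<in> carrier G" "h \<in> carrier G"
  shows "commutator G g h = \<one> \<longleftrightarrow> g \<otimes> h = h \<otimes> g"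
proof -
  have "commutator G g h \<otimes> (h \<otimes> g) = g \<otimes> h"
    using assms by (simp add: commutator_def m_assoc)
  then show ?thesis
    using assms by (metis commutator_closed l_one m_closed right_cancel one_closed)
qed

lemma commutator_in_derived:
  "a \<in> H \<Longrightarrow> b \<in> H \<Longrightarrow> commutator G a b \<in> derived G H"
  unfolding derived_def commutator_def by (rule generate.incl) blast

lemma derived_subset_subgroup:
  assumes "subgroup K G" and "\<And>a b. a \<in> H \<Longrightarrow> b \<in> H \<Longrightarrow> commutator G a b \<in> K"
  shows "derived G H \<subseteq> K"
  unfolding derived_def
  by (rule generate_subgroup_incl) (use assms in \<open>auto simp: commutator_def\<close>)

lemma commute_inv_right:
  assumes "a \<in> carrier G" "b \<in> carrier G" "a \<otimes> b = b \<otimes> a"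
  shows "a \<otimes> inv b = inv b \<otimes> a"
  using assms by (metis inv_closed inv_solve_left m_assoc m_closed r_inv r_one)

lemma commute_mult_right:
  assumes "z \<in> carrier G" "a \<in> carrier G" "b \<in> carrier G"
    and "z \<otimes> a = a \<otimes> z" "z \<otimes> b = b \<otimes> z"
  shows "z \<otimes> (a \<otimes> b) = (a \<otimes> b) \<otimes> z"
  using assms by (metis m_assoc)

lemma commute_generate:
  assumes "S \<subseteq> carrier G" "a \<in> carrier G" "\<And>s. s \<in> S \<Longrightarrow> a \<otimes> s = s \<otimes> a"
    and "x \<in> generate G S"
  shows "a \<otimes> x = x \<otimes> a"
  using assms(4)
proof induct
  case (eng h1 h2)
  then show ?case
    using assms(1,2) generate_in_carrier commute_mult_right by meson
qed (use assms commute_inv_right in auto)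

lemma commutator_generate_central:
  assumes Z: "subgroup Z G" and Z_central: "\<And>z g. z \<in> Z \<Longrightarrow> g \<in> carrier G \<Longrightarrow> z \<otimes> g = g \<otimes> z"
    and S: "S \<subseteq> carrier G" and g: "g \<in> carrier G"
    and gens: "\<And>s. s \<in> S \<Longrightarrow> commutator G g s \<in> Z"
    and x: "x \<in> generate G S"
  shows "commutator G g x \<in> Z"
  using x
proof induct
  case one
  then show ?case using g subgroup.one_closed[OF Z] by (simp add: commutator_def)
next
  case (incl h)
  then show ?case using gens by simp
next
  case (inv h)
  have h: "h \<in> carrier G" and c: "commutator G g h \<in> Z" using inv S gens by auto
  have "inv (commutator G g h) \<otimes> h = h \<otimes> inv (commutator G g h)"
    using Z_central[OF subgroup.m_inv_closed[OF Z c] h] .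
  then have "commutator G g (inv h) = inv (commutator G g h)"
    using g h by (simp add: commutator_inv_right m_assoc)
  then show ?case using subgroup.m_inv_closed[OF Z c] by simp
next
  case (eng h1 h2)
  have h: "h1 \<in> carrier G" "h2 \<in> carrier G" using eng generate_in_carrier[OF S] by auto
  have "h1 \<otimes> commutator G g h2 = commutator G g h2 \<otimes> h1"
    using Z_central[OF eng(4) h(1)] by simp
  then have "h1 \<otimes> commutator G g h2 \<otimes> inv h1 = commutator G g h2"
    using g h by (simp add: m_assoc)
  then show ?case
    using eng commutator_mult_right[OF g h] subgroup.m_closed[OF Z] by simp
qed

lemma set_mult_iff: "x \<in> H <#> K \<longleftrightarrow> (\<exists>h\<in>H. \<exists>k\<in>K. x = h \<otimes> k)"
  by (auto simp: set_mult_def)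

lemma subgroup_set_mult_commuting:
  assumes H: "subgroup H G" and K: "subgroup K G"
    and comm: "\<And>h k. h \<in> H \<Longrightarrow> k \<in> K \<Longrightarrow> h \<otimes> k = k \<otimes> h"
  shows "subgroup (H <#> K) G"
proof (rule subgroupI)
  have HK: "H \<subseteq> carrier G" "K \<subseteq> carrier G" using H K subgroup.subset by auto
  then show "H <#> K \<subseteq> carrier G" by (rule setmult_subset_G)
  have "\<one> \<otimes> \<one> \<in> H <#> K"
    unfolding set_mult_iff using H K subgroup.one_closed by blast
  then show "H <#> K \<noteq> {}" by blast
  fix x y assume "x \<in> H <#> K" "y \<in> H <#> K"
  then obtain h k h' k' where hk: "h \<in> H" "k \<in> K" "x = h \<otimes> k" "h' \<in> H" "k' \<in> K" "y = h' \<otimes> k'"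
    unfolding set_mult_iff by blast
  have c: "h \<in> carrier G" "k \<in> carrier G" "h' \<in> carrier G" "k' \<in> carrier G"
    using hk HK by auto
  have inv: "inv h \<in> H" "inv k \<in> K"
    using hk subgroup.m_inv_closed[OF H] subgroup.m_inv_closed[OF K] by auto
  have "inv x = inv h \<otimes> inv k"
    using hk c comm[OF inv] by (simp add: inv_mult_group)
  then show "inv x \<in> H <#> K"
    unfolding set_mult_iff using inv by blast
  have "x \<otimes> y = h \<otimes> (k \<otimes> h') \<otimes> k'" using hk c by (simp add: m_assoc)
  also have "\<dots> = h \<otimes> (h' \<otimes> k) \<otimes> k'" using comm[OF hk(4) hk(2)] by simp
  also have "\<dots> = (h \<otimes> h') \<otimes> (k \<otimes> k')" using c by (simp add: m_assoc)
  finally show "x \<otimes> y \<in> H <#> K"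
    unfolding set_mult_iff using hk subgroup.m_closed[OF H] subgroup.m_closed[OF K] by blast
qed

lemma generate_Un_commuting_subgroups:
  assumes H: "subgroup H G" and K: "subgroup K G"
    and comm: "\<And>h k. h \<in> H \<Longrightarrow> k \<in> K \<Longrightarrow> h \<otimes> k = k \<otimes> h"
  shows "generate G (H \<union> K) = H <#> K"
proof
  have "H \<subseteq> H <#> K"
  proof
    fix h assume h: "h \<in> H"
    have "h = h \<otimes> \<one>" using subgroup.mem_carrier[OF H h] by simp
    then show "h \<in> H <#> K" unfolding set_mult_iff using h subgroup.one_closed[OF K] by blast
  qed
  moreover have "K \<subseteq> H <#> K"
  proof
    fix k assume k: "k \<in> K"
    have "k = \<one> \<otimes> k" using subgroup.mem_carrier[OF K k] by simp
    then show "k \<in> H <#> K" unfolding set_mult_iff using k subgroup.one_closed[OF H] by blast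
  qed
  ultimately have "H \<union> K \<subseteq> H <#> K" by blast
  then show "generate G (H \<union> K) \<subseteq> H <#> K"
    by (rule generate_subgroup_incl[OF _ subgroup_set_mult_commuting[OF H K comm]])
  show "H <#> K \<subseteq> generate G (H \<union> K)"
  proof
    fix x assume "x \<in> H <#> K"
    then obtain h k where "h \<in> H" "k \<in> K" "x = h \<otimes> k" unfolding set_mult_iff by blast
    then show "x \<in> generate G (H \<union> K)" by (simp add: generate.eng generate.incl)
  qed
qed

lemma generate_Un_generate:
  assumes "S \<subseteq> carrier G" "T \<subseteq> carrier G"
  shows "generate G (generate G S \<union> T) = generate G (S \<union> T)"
proof
  show "generate G (S \<union> T) \<subseteq> generate G (generate G S \<union> T)"
    by (rule mono_generate) (auto intro: generate.incl)
  show "generate G (generate G S \<union> T) \<subseteq> generate G (S \<union> T)"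
    using assms mono_generate[of S "S \<union> T"]
    by (intro generate_subgroup_incl generate_is_subgroup) (auto intro: generate.incl)
qed

lemma card_set_mult_fibre:
  assumes H: "subgroup H G" and K: "subgroup K G" and h0: "h0 \<in> H" and k0: "k0 \<in> K"
  shows "card {(h, k). h \<in> H \<and> k \<in> K \<and> h \<otimes> k = h0 \<otimes> k0} = card (H \<inter> K)"
proof -
  let ?f = "\<lambda>t. (h0 \<otimes> t, inv t \<otimes> k0)"
  have HK: "H \<subseteq> carrier G" "K \<subseteq> carrier G" using H K subgroup.subset by auto
  have c0: "h0 \<in> carrier G" "k0 \<in> carrier G" using h0 k0 HK by auto
  have "inj_on ?f (H \<inter> K)"
  proof (rule inj_onI)
    fix t t' assume t: "t \<in> H \<inter> K" "t' \<in> H \<inter> K" "?f t = ?f t'"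
    then have "t \<in> carrier G" "t' \<in> carrier G" using HK by auto
    then show "t = t'" using t(3) c0 by simp
  qed
  moreover have "{(h, k). h \<in> H \<and> k \<in> K \<and> h \<otimes> k = h0 \<otimes> k0} = ?f ` (H \<inter> K)"
  proof (intro equalityI subsetI)
    fix x assume "x \<in> {(h, k). h \<in> H \<and> k \<in> K \<and> h \<otimes> k = h0 \<otimes> k0}"
    then obtain h k where hk: "x = (h, k)" "h \<in> H" "k \<in> K" "h \<otimes> k = h0 \<otimes> k0" by blast
    let ?t = "inv h0 \<otimes> h"
    have c: "?t \<in> carrier G" "h \<in> carrier G" "k \<in> carrier G" using hk HK c0 by auto
    have "?t \<otimes> k = inv h0 \<otimes> (h \<otimes> k)" using c c0 by (simp add: m_assoc)
    also have "\<dots> = k0" using hk(4) c0 by simp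
    finally have k0_eq: "k0 = ?t \<otimes> k" by simp
    then have "?t = k0 \<otimes> inv k" using c by (simp add: m_assoc)
    then have "?t \<in> H \<inter> K"
      using subgroup.m_closed[OF H subgroup.m_inv_closed[OF H h0] hk(2)]
        subgroup.m_closed[OF K k0 subgroup.m_inv_closed[OF K hk(3)]] by simp
    moreover have "x = ?f ?t"
      unfolding hk(1) k0_eq using c c0 by simp
    ultimately show "x \<in> ?f ` (H \<inter> K)" by blast
  next
    fix x assume "x \<in> ?f ` (H \<inter> K)"
    then obtain t where t: "t \<in> H" "t \<in> K" "x = ?f t" by blast
    have "h0 \<otimes> t \<otimes> (inv t \<otimes> k0) = h0 \<otimes> k0"
      using t HK c0 by (simp add: m_assoc subset_iff)
    moreover have "h0 \<otimes> t \<in> H" "inv t \<otimes> k0 \<in> K"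
      using t h0 k0 H K subgroup.m_closed subgroup.m_inv_closed by metis+
    ultimately show "x \<in> {(h, k). h \<in> H \<and> k \<in> K \<and> h \<otimes> k = h0 \<otimes> k0}"
      using t(3) by simp
  qed
  ultimately show ?thesis by (simp add: card_image)
qed

lemma card_set_mult_Int:
  assumes fin: "finite (carrier G)" and H: "subgroup H G" and K: "subgroup K G"
  shows "card (H <#> K) * card (H \<inter> K) = card H * card K"
proof -
  let ?F = "\<lambda>x. {(h, k). h \<in> H \<and> k \<in> K \<and> h \<otimes> k = x}"
  have HK: "H \<subseteq> carrier G" "K \<subseteq> carrier G" using H K subgroup.subset by auto
  then have fin_HK: "finite (H \<times> K)" "finite (H <#> K)"
    using fin by (auto intro: finite_subset dest: setmult_subset_G)
  have "H \<times> K = (\<Union>x\<in>H <#> K. ?F x)"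
  proof (intro equalityI subsetI)
    fix y assume "y \<in> H \<times> K"
    then obtain h k where hk: "y = (h, k)" "h \<in> H" "k \<in> K" by blast
    then have "h \<otimes> k \<in> H <#> K" unfolding set_mult_iff by blast
    then show "y \<in> (\<Union>x\<in>H <#> K. ?F x)" using hk by (intro UN_I) auto
  qed auto
  moreover have "card (\<Union>x\<in>H <#> K. ?F x) = (\<Sum>x\<in>H <#> K. card (?F x))"
  proof (rule card_UN_disjoint)
    show "\<forall>x\<in>H <#> K. finite (?F x)"
      using fin_HK(1) by (auto intro: finite_subset[of _ "H \<times> K"])
  qed (use fin_HK in blast)+
  ultimately have "card (H \<times> K) = (\<Sum>x\<in>H <#> K. card (?F x))" by simp
  also have "\<dots> = (\<Sum>x\<in>H <#> K. card (H \<inter> K))"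
  proof (rule sum.cong)
    fix x assume "x \<in> H <#> K"
    then obtain h k where "h \<in> H" "k \<in> K" "x = h \<otimes> k" unfolding set_mult_iff by blast
    then show "card (?F x) = card (H \<inter> K)" using card_set_mult_fibre[OF H K] by simp
  qed simp
  finally show ?thesis by (simp add: card_cartesian_product)
qed

lemma subgroup_of_prime_card_eq:
  assumes Z: "subgroup Z G" and card_Z: "card Z = p" and p: "Factorial_Ring.prime p"
    and K: "subgroup K G" and "K \<subseteq> Z" and "x \<in> K" "x \<noteq> \<one>"
  shows "K = Z"
proof -
  have fin: "finite Z" using card_Z p by (metis card.infinite not_prime_0)
  have "card K dvd p"
    using group.lagrange[OF subgroup_imp_group[OF Z] subgroup_incl[OF K Z \<open>K \<subseteq> Z\<close>]] card_Z
    by (simp add: order_def) (metis dvd_triv_right)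
  moreover have "card {\<one>, x} \<le> card K"
    using assms fin subgroup.one_closed[OF K] by (intro card_mono) (auto intro: finite_subset)
  then have "card K \<noteq> 1" using \<open>x \<noteq> \<one>\<close> by auto
  ultimately have "card K = p" using p by (meson prime_nat_iff)
  then show ?thesis using assms fin by (simp add: card_subset_eq)
qed

lemma eq_one_of_pow_coprime:
  assumes Z: "subgroup Z G" and "card Z = p" and p: "Factorial_Ring.prime p"
    and z: "z \<in> Z" and "z [^] (m::nat) = \<one>" and "coprime m p"
  shows "z = \<one>"
proof -
  have zc: "z \<in> carrier G" using subgroup.mem_carrier[OF Z z] .
  have "z [^]\<^bsub>G\<lparr>carrier := Z\<rparr>\<^esub> order (G\<lparr>carrier := Z\<rparr>) = \<one>\<^bsub>G\<lparr>carrier := Z\<rparr>\<^esub>"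
    using group.pow_order_eq_1[OF subgroup_imp_group[OF Z]] z by simp
  then have "z [^] p = \<one>" using assms by (simp add: order_def nat_pow_consistent[symmetric])
  then have "ord z = 1"
    using assms pow_eq_id[OF zc] coprime_common_divisor_nat by blast
  then show ?thesis using pow_eq_id[OF zc, of 1] zc by simp
qed

end

section \<open>The subgroup \<open>[G, \<alpha>]\<close> of an endomorphism\<close>

primrec orbit_prod :: "('a, 'b) monoid_scheme \<Rightarrow> ('a \<Rightarrow> 'a) \<Rightarrow> 'a \<Rightarrow> nat \<Rightarrow> 'a" where
  "orbit_prod G f y 0 = \<one>\<^bsub>G\<^esub>"
| "orbit_prod G f y (Suc k) = orbit_prod G f y k \<otimes>\<^bsub>G\<^esub> (f ^^ k) y"

context group begin

lemma generate_normalI: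
  assumes S: "S \<subseteq> carrier G"
    and conj: "\<And>g s. g \<in> carrier G \<Longrightarrow> s \<in> S \<Longrightarrow> g \<otimes> s \<otimes> inv g \<in> generate G S"
  shows "generate G S \<lhd> G"
proof (rule normal_invI)
  show "subgroup (generate G S) G" using S by (rule generate_is_subgroup)
  fix g h assume g: "g \<in> carrier G" and h: "h \<in> generate G S"
  show "g \<otimes> h \<otimes> inv g \<in> generate G S"
    using h
  proof induct
    case one
    then show ?case using g by (simp add: generate.one)
  next
    case (incl s)
    then show ?case using conj g by blast
  next
    case (inv s)
    have "g \<otimes> inv s \<otimes> inv g = inv (g \<otimes> s \<otimes> inv g)"
      using g inv S by (simp add: inv_mult_group m_assoc subset_iff)
    then show ?case using conj[OF g inv] generate_m_inv_closed[OF S] by simp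
  next
    case (eng h1 h2)
    have c: "h1 \<in> carrier G" "h2 \<in> carrier G" using eng generate_in_carrier[OF S] by auto
    have "g \<otimes> (h1 \<otimes> h2) \<otimes> inv g = (g \<otimes> h1 \<otimes> inv g) \<otimes> (g \<otimes> h2 \<otimes> inv g)"
      using g c by (simp add: m_assoc)
    then show ?case using eng by (simp add: generate.eng)
  qed
qed

context
  fixes \<alpha> :: "'a \<Rightarrow> 'a"
  assumes hom: "\<alpha> \<in> hom G G"
begin

lemma endo_group_hom: "group_hom G G \<alpha>"
  using hom by (intro group_hom.intro group_hom_axioms.intro is_group)

lemma endo_closed [simp]: "x \<in> carrier G \<Longrightarrow> \<alpha> x \<in> carrier G"
  by (rule group_hom.hom_closed[OF endo_group_hom])

lemma endo_one [simp]: "\<alpha> \<one> = \<one>"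
  by (rule group_hom.hom_one[OF endo_group_hom])

lemma endo_mult: "x \<in> carrier G \<Longrightarrow> y \<in> carrier G \<Longrightarrow> \<alpha> (x \<otimes> y) = \<alpha> x \<otimes> \<alpha> y"
  by (rule group_hom.hom_mult[OF endo_group_hom])

lemma endo_inv: "x \<in> carrier G \<Longrightarrow> \<alpha> (inv x) = inv (\<alpha> x)"
  by (rule group_hom.hom_inv[OF endo_group_hom])

lemma endo_funpow_closed [simp]: "x \<in> carrier G \<Longrightarrow> (\<alpha> ^^ k) x \<in> carrier G"
  by (induction k) simp_all

lemma comm_aut_generators_closed: "{inv g \<otimes> \<alpha> g | g. g \<in> carrier G} \<subseteq> carrier G"
  by auto

lemma comm_aut_subgroup: "subgroup (comm_aut G \<alpha>) G"
  unfolding comm_aut_def using comm_aut_generators_closed by (rule generate_is_subgroup)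

lemma inv_mult_endo_in_comm_aut: "g \<in> carrier G \<Longrightarrow> inv g \<otimes> \<alpha> g \<in> comm_aut G \<alpha>"
  unfolding comm_aut_def by (rule generate.incl) blast

lemma inv_mult_funpow_in_comm_aut:
  assumes x: "x \<in> carrier G"
  shows "inv x \<otimes> (\<alpha> ^^ k) x \<in> comm_aut G \<alpha>"
proof (induction k)
  case 0
  then show ?case using x subgroup.one_closed[OF comm_aut_subgroup] by simp
next
  case (Suc k)
  have "inv x \<otimes> (\<alpha> ^^ Suc k) x = (inv x \<otimes> (\<alpha> ^^ k) x) \<otimes> (inv ((\<alpha> ^^ k) x) \<otimes> \<alpha> ((\<alpha> ^^ k) x))"
    using x by (simp add: m_assoc)
  then show ?case
    using Suc x subgroup.m_closed[OF comm_aut_subgroup] inv_mult_endo_in_comm_aut by simp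
qed

lemma comm_aut_normal: "comm_aut G \<alpha> \<lhd> G"
  unfolding comm_aut_def
proof (rule generate_normalI[OF comm_aut_generators_closed])
  fix g s assume g: "g \<in> carrier G" and "s \<in> {inv y \<otimes> \<alpha> y | y. y \<in> carrier G}"
  then obtain y where y: "y \<in> carrier G" "s = inv y \<otimes> \<alpha> y" by blast
  \<comment> \<open>writing \<open>\<delta> z = z\<inverse> \<alpha>(z)\<close>, the conjugate \<open>g \<delta>(y) g\<inverse>\<close> is \<open>\<delta>(y g\<inverse>) \<delta>(g\<inverse>)\<inverse>\<close>\<close>
  have "g \<otimes> s \<otimes> inv g
      = (inv (y \<otimes> inv g) \<otimes> \<alpha> (y \<otimes> inv g)) \<otimes> inv (inv (inv g) \<otimes> \<alpha> (inv g))"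
    using g y by (simp add: endo_mult endo_inv inv_mult_group m_assoc)
  moreover have "inv (y \<otimes> inv g) \<otimes> \<alpha> (y \<otimes> inv g) \<in> comm_aut G \<alpha>"
    using g y by (intro inv_mult_endo_in_comm_aut) simp
  moreover have "inv (inv (inv g) \<otimes> \<alpha> (inv g)) \<in> comm_aut G \<alpha>"
    using g inv_mult_endo_in_comm_aut[of "inv g"] subgroup.m_inv_closed[OF comm_aut_subgroup]
    by blast
  ultimately show "g \<otimes> s \<otimes> inv g \<in> generate G {inv y \<otimes> \<alpha> y | y. y \<in> carrier G}"
    using subgroup.m_closed[OF comm_aut_subgroup] unfolding comm_aut_def by simp
qed

lemma fixed_commute_comm_aut:
  assumes fixed: "derived G (carrier G) \<subseteq> fixed_points G \<alpha>"
    and d: "d \<in> carrier G" "\<alpha> d = d" and n: "n \<in> comm_aut G \<alpha>"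
  shows "d \<otimes> n = n \<otimes> d"
  using n unfolding comm_aut_def
proof (rule commute_generate[OF comm_aut_generators_closed d(1), rotated])
  fix s assume "s \<in> {inv g \<otimes> \<alpha> g | g. g \<in> carrier G}"
  then obtain g where g: "g \<in> carrier G" "s = inv g \<otimes> \<alpha> g" by blast
  have "commutator G g d \<in> fixed_points G \<alpha>"
    using fixed commutator_in_derived[of g "carrier G" d] g d by blast
  then have "commutator G (\<alpha> g) d = commutator G g d"
    using g d by (simp add: fixed_points_def commutator_def endo_mult endo_inv)
  then have "\<alpha> g \<otimes> d \<otimes> inv (\<alpha> g) = g \<otimes> d \<otimes> inv g"
    using g d by (simp add: commutator_def)
  then have "inv g \<otimes> (\<alpha> g \<otimes> d \<otimes> inv (\<alpha> g)) \<otimes> \<alpha> g = inv g \<otimes> (g \<otimes> d \<otimes> inv g) \<otimes> \<alpha> g"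
    by simp
  then have "d \<otimes> (inv g \<otimes> \<alpha> g) = (inv g \<otimes> \<alpha> g) \<otimes> d"
    using g d by (simp add: m_assoc)
  then show "d \<otimes> s = s \<otimes> d" using g(2) by simp
qed

lemma orbit_prod_closed [simp]: "y \<in> carrier G \<Longrightarrow> orbit_prod G \<alpha> y k \<in> carrier G"
  by (induction k) simp_all

lemma orbit_prod_Suc_left:
  assumes y: "y \<in> carrier G"
  shows "orbit_prod G \<alpha> y (Suc k) = y \<otimes> \<alpha> (orbit_prod G \<alpha> y k)"
proof (induction k)
  case 0
  then show ?case using y by simp
next
  case (Suc k)
  have "orbit_prod G \<alpha> y (Suc (Suc k)) = y \<otimes> (\<alpha> (orbit_prod G \<alpha> y k) \<otimes> \<alpha> ((\<alpha> ^^ k) y))"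
    using Suc y by (simp add: m_assoc)
  also have "\<dots> = y \<otimes> \<alpha> (orbit_prod G \<alpha> y (Suc k))"
    using y by (simp add: endo_mult)
  finally show ?case .
qed

lemma orbit_prod_fixed:
  assumes y: "y \<in> carrier G" and period: "(\<alpha> ^^ m) y = y"
    and comm: "y \<otimes> orbit_prod G \<alpha> y m = orbit_prod G \<alpha> y m \<otimes> y"
  shows "\<alpha> (orbit_prod G \<alpha> y m) = orbit_prod G \<alpha> y m"
proof -
  have "y \<otimes> \<alpha> (orbit_prod G \<alpha> y m) = orbit_prod G \<alpha> y (Suc m)"
    using orbit_prod_Suc_left[OF y] by simp
  also have "\<dots> = y \<otimes> orbit_prod G \<alpha> y m"
    using period comm by simp
  finally show ?thesis using y by simp
qed

lemma orbit_prod_invariant_hom: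
  assumes y: "y \<in> carrier G"
    and \<kappa>_closed: "\<And>x. x \<in> carrier G \<Longrightarrow> \<kappa> x \<in> carrier G"
    and \<kappa>_mult: "\<And>a b. a \<in> carrier G \<Longrightarrow> b \<in> carrier G \<Longrightarrow> \<kappa> (a \<otimes> b) = \<kappa> a \<otimes> \<kappa> b"
    and \<kappa>_invariant: "\<And>x. x \<in> carrier G \<Longrightarrow> \<kappa> (\<alpha> x) = \<kappa> x"
  shows "\<kappa> (orbit_prod G \<alpha> y k) = \<kappa> y [^] k"
proof (induction k)
  case 0
  have "\<kappa> \<one> = \<kappa> \<one> \<otimes> \<kappa> \<one>" using \<kappa>_mult[of \<one> \<one>] by simp
  then show ?case using \<kappa>_closed[of \<one>] by simp
next
  case (Suc k)
  have "\<kappa> ((\<alpha> ^^ j) y) = \<kappa> y" for j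
    using y by (induction j) (simp_all add: \<kappa>_invariant)
  then show ?case using Suc y by (simp add: \<kappa>_mult)
qed

end

end

section \<open>Central products of extra-special groups of order \<open>p\<^sup>3\<close>\<close>

locale extraspecial_central_product = group G for G (structure) +
  fixes Gs :: "nat \<Rightarrow> 'a set" and m p :: nat
  assumes finite_carrier: "finite (carrier G)"
    and two_le_m: "2 \<le> m"
    and prime_p: "Factorial_Ring.prime p"
    and central_product: "iterated_central_product G Gs m"
    and factor_extra_special: "i < m \<Longrightarrow> extra_special p (G\<lparr>carrier := Gs i\<rparr>)"
    and card_factor: "i < m \<Longrightarrow> card (Gs i) = p ^ 3"
begin

definition partial_product :: "nat \<Rightarrow> 'a set" where
  "partial_product k = generate G (\<Union>i<k. Gs i)"

definition Z :: "'a set" where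
  "Z = center_of G (Gs 0)"

lemma factor_subgroup: "i < m \<Longrightarrow> subgroup (Gs i) G"
  using central_product by (simp add: iterated_central_product_def)

lemma factor_in_carrier: "i < m \<Longrightarrow> x \<in> Gs i \<Longrightarrow> x \<in> carrier G"
  by (rule subgroup.mem_carrier[OF factor_subgroup])

lemma generate_factors: "generate G (\<Union>i<m. Gs i) = carrier G"
  using central_product by (simp add: iterated_central_product_def)

lemma factors_in_carrier: "k \<le> m \<Longrightarrow> (\<Union>i<k. Gs i) \<subseteq> carrier G"
  using factor_in_carrier order_less_le_trans by blast

lemma central_product_step:
  assumes "1 \<le> k" "k < m"
  shows "(\<forall>h\<in>partial_product k. \<forall>x\<in>Gs k. h \<otimes> x = x \<otimes> h)
    \<and> partial_product k \<inter> Gs k = center_of G (partial_product k)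
    \<and> partial_product k \<inter> Gs k = center_of G (Gs k)"
  using central_product assms unfolding iterated_central_product_def partial_product_def Let_def
  by blast

lemma partial_product_commute:
  "1 \<le> k \<Longrightarrow> k < m \<Longrightarrow> h \<in> partial_product k \<Longrightarrow> x \<in> Gs k \<Longrightarrow> h \<otimes> x = x \<otimes> h"
  using central_product_step by blast

lemma partial_product_Int_factor:
  "1 \<le> k \<Longrightarrow> k < m \<Longrightarrow> partial_product k \<inter> Gs k = center_of G (Gs k)"
  using central_product_step by blast

lemma center_partial_product:
  "1 \<le> k \<Longrightarrow> k < m \<Longrightarrow> center_of G (partial_product k) = center_of G (Gs k)"
  using central_product_step by blast

lemma card_center_factor: "i < m \<Longrightarrow> card (center_of G (Gs i)) = p"
  using factor_extra_special by (simp add: extra_special_def)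

lemma factor_not_commutative:
  assumes "i < m"
  shows "\<exists>x\<in>Gs i. \<exists>y\<in>Gs i. x \<otimes> y \<noteq> y \<otimes> x"
proof (rule ccontr)
  assume "\<not> ?thesis"
  then have "center_of G (Gs i) = Gs i" by (auto simp: center_of_eq)
  then have "p = p ^ 3" using card_center_factor[OF assms] card_factor[OF assms] by simp
  moreover have "p ^ 1 < p ^ 3" using prime_gt_1_nat[OF prime_p] by (intro power_strict_increasing) simp_all
  ultimately show False by simp
qed

lemma factors_commute:
  assumes "i < m" "j < m" "i \<noteq> j" "x \<in> Gs i" "y \<in> Gs j"
  shows "x \<otimes> y = y \<otimes> x"
proof -
  have "x \<otimes> y = y \<otimes> x" if "i < j" "j < m" "x \<in> Gs i" "y \<in> Gs j" for i j x y
  proof -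
    have "x \<in> partial_product j" unfolding partial_product_def using that by (auto intro: generate.incl)
    then show ?thesis using partial_product_commute[of j] that by simp
  qed
  then show ?thesis using assms by (metis linorder_neqE_nat)
qed

lemma partial_product_subgroup: "k \<le> m \<Longrightarrow> subgroup (partial_product k) G"
  unfolding partial_product_def using factors_in_carrier by (rule generate_is_subgroup)

lemma partial_product_in_carrier: "k \<le> m \<Longrightarrow> x \<in> partial_product k \<Longrightarrow> x \<in> carrier G"
  by (rule subgroup.mem_carrier[OF partial_product_subgroup])

lemma partial_product_Suc:
  assumes "1 \<le> k" and k: "k < m"
  shows "partial_product (Suc k) = partial_product k <#> Gs k"
proof -
  have "(\<Union>i<Suc k. Gs i) = (\<Union>i<k. Gs i) \<union> Gs k" by (auto simp: lessThan_Suc)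
  then have "partial_product (Suc k) = generate G (partial_product k \<union> Gs k)"
    using generate_Un_generate factors_in_carrier subgroup.subset[OF factor_subgroup] k
    by (simp add: partial_product_def)
  also have "\<dots> = partial_product k <#> Gs k"
    using assms by (intro generate_Un_commuting_subgroups partial_product_subgroup factor_subgroup
        partial_product_commute) simp_all
  finally show ?thesis .
qed

lemma partial_product_one: "partial_product 1 = Gs 0"
proof -
  have "generate G (Gs 0) \<subseteq> Gs 0"
    using two_le_m by (intro generate_subgroup_incl[OF subset_refl factor_subgroup]) simp
  moreover have "(\<Union>i<1. Gs i) = Gs 0" by (simp add: lessThan_Suc)
  ultimately show ?thesis by (auto simp: partial_product_def intro: generate.incl)
qed

lemma partial_product_m: "partial_product m = carrier G"
  by (simp add: partial_product_def generate_factors)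

lemma card_partial_product: "k < m \<Longrightarrow> card (partial_product (Suc k)) = p ^ (2 * k + 3)"
proof (induction k)
  case 0
  then show ?case using partial_product_one card_factor by simp
next
  case (Suc k)
  have k: "1 \<le> Suc k" "Suc k < m" "Suc k \<le> m" using Suc.prems by simp_all
  have "card (partial_product (Suc (Suc k))) * card (partial_product (Suc k) \<inter> Gs (Suc k))
      = card (partial_product (Suc k)) * card (Gs (Suc k))"
    unfolding partial_product_Suc[OF k(1,2)]
    by (rule card_set_mult_Int[OF finite_carrier partial_product_subgroup[OF k(3)] factor_subgroup[OF k(2)]])
  then have "card (partial_product (Suc (Suc k))) * p = p ^ (2 * k + 3) * p ^ 3"
    using Suc k partial_product_Int_factor card_center_factor card_factor by simp
  moreover have "p ^ (2 * k + 3) * p ^ 3 = p ^ (2 * Suc k + 3) * p"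
    by (simp flip: power_add power_Suc2)
  ultimately show ?case using prime_gt_1_nat[OF prime_p] by simp
qed

lemma card_carrier: "card (carrier G) = p ^ (2 * m + 1)"
proof -
  have m: "Suc (m - 1) = m" "2 * (m - 1) + 3 = 2 * m + 1" using two_le_m by auto
  have "card (partial_product (Suc (m - 1))) = p ^ (2 * (m - 1) + 3)"
    using two_le_m by (intro card_partial_product) simp
  then show ?thesis unfolding m partial_product_m .
qed

lemma center_factor_subset_Suc:
  assumes k: "1 \<le> k" "Suc k < m"
  shows "center_of G (Gs k) \<subseteq> center_of G (Gs (Suc k))"
proof
  fix z assume "z \<in> center_of G (Gs k)"
  then have z: "z \<in> Gs k" "\<forall>x\<in>Gs k. z \<otimes> x = x \<otimes> z" "\<forall>h\<in>partial_product k. z \<otimes> h = h \<otimes> z"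
    using center_partial_product[of k] k by (auto simp: center_of_eq)
  have "z \<in> partial_product (Suc k)"
    unfolding partial_product_def using z(1) by (auto intro: generate.incl)
  moreover have "z \<otimes> g = g \<otimes> z" if "g \<in> partial_product (Suc k)" for g
  proof -
    have "g \<in> partial_product k <#> Gs k" using that partial_product_Suc[OF k(1)] k by simp
    then obtain h x where "h \<in> partial_product k" "x \<in> Gs k" "g = h \<otimes> x"
      unfolding set_mult_iff by blast
    moreover have "h \<in> carrier G" "x \<in> carrier G" "z \<in> carrier G"
      using calculation k z(1) factor_in_carrier[of k] partial_product_in_carrier[of k] by simp_all
    moreover have "z \<otimes> h = h \<otimes> z" "z \<otimes> x = x \<otimes> z"
      using calculation z by blast+
    ultimately show ?thesis using commute_mult_right by blast
  qed
  ultimately show "z \<in> center_of G (Gs (Suc k))"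
    using center_partial_product[of "Suc k"] k by (auto simp: center_of_eq)
qed

lemma center_factor: "i < m \<Longrightarrow> center_of G (Gs i) = Z"
proof (induction i)
  case 0
  then show ?case by (simp add: Z_def)
next
  case (Suc k)
  show ?case
  proof (cases k)
    case 0
    then show ?thesis
      using center_partial_product[of 1] partial_product_one two_le_m by (simp add: Z_def)
  next
    case (Suc j)
    have sub: "Z \<subseteq> center_of G (Gs (Suc k))"
      using Suc.IH center_factor_subset_Suc[of k] Suc \<open>Suc k < m\<close> by simp
    have "center_of G (Gs (Suc k)) \<subseteq> carrier G"
      using factor_in_carrier[OF \<open>Suc k < m\<close>] by (auto simp: center_of_eq)
    then have fin: "finite (center_of G (Gs (Suc k)))"
      using finite_carrier by (rule finite_subset)
    have "card Z = card (center_of G (Gs (Suc k)))"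
      using Suc.IH card_center_factor[of k] card_center_factor[OF \<open>Suc k < m\<close>] \<open>Suc k < m\<close>
      by simp
    then show ?thesis using card_subset_eq[OF fin sub] by simp
  qed
qed

lemma Z_subset_factor: "i < m \<Longrightarrow> Z \<subseteq> Gs i"
  using center_factor by (auto simp: center_of_eq)

lemma card_Z: "card Z = p"
  using card_center_factor center_factor two_le_m by fastforce

lemma derived_factor: "i < m \<Longrightarrow> derived G (Gs i) = Z"
  using factor_extra_special derived_consistent[OF subset_refl factor_subgroup] center_factor
  by (simp add: extra_special_def)

lemma Z_subgroup: "subgroup Z G"
  using derived_factor[of 0] derived_is_subgroup[of "Gs 0"] subgroup.subset[OF factor_subgroup]
    two_le_m by simp

lemma Z_central: "z \<in> Z \<Longrightarrow> g \<in> carrier G \<Longrightarrow> z \<otimes> g = g \<otimes> z"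
  using commute_generate[OF factors_in_carrier[OF order_refl] subgroup.mem_carrier[OF Z_subgroup]]
    center_factor generate_factors by (fastforce simp: center_of_eq)

lemma commutator_in_Z:
  assumes g: "g \<in> carrier G" and h: "h \<in> carrier G"
  shows "commutator G g h \<in> Z"
proof -
  note central_gen = commutator_generate_central[OF Z_subgroup Z_central factors_in_carrier[OF order_refl]]
  have factor_commutator: "commutator G x h \<in> Z" if "i < m" "x \<in> Gs i" for i x
  proof (rule central_gen)
    fix s assume "s \<in> (\<Union>i<m. Gs i)"
    then obtain j where j: "j < m" "s \<in> Gs j" by blast
    show "commutator G x s \<in> Z"
    proof (cases "j = i")
      case True
      then show ?thesis using that j commutator_in_derived derived_factor by blast
    next
      case False
      have "x \<otimes> s = s \<otimes> x" using factors_commute[OF that(1) j(1)] False that(2) j(2) by simp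
      then have "commutator G x s = \<one>"
        using commutator_eq_one_iff factor_in_carrier that j by simp
      then show ?thesis using subgroup.one_closed[OF Z_subgroup] by simp
    qed
  qed (use that h factor_in_carrier generate_factors in auto)
  have "commutator G h g \<in> Z"
  proof (rule central_gen)
    fix s assume "s \<in> (\<Union>i<m. Gs i)"
    then obtain i where i: "i < m" "s \<in> Gs i" by blast
    then have "commutator G h s = inv (commutator G s h)"
      using commutator_swap[OF factor_in_carrier[OF i] h] by simp
    then show "commutator G h s \<in> Z"
      using factor_commutator[OF i] subgroup.m_inv_closed[OF Z_subgroup] by simp
  qed (use g h generate_factors in auto)
  then show ?thesis
    using commutator_swap[OF h g] subgroup.m_inv_closed[OF Z_subgroup] by simp
qed

lemma central_in_Z:
  assumes c: "c \<in> carrier G" and central: "\<And>g. g \<in> carrier G \<Longrightarrow> c \<otimes> g = g \<otimes> c"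
  shows "c \<in> Z"
proof -
  define k where "k = m - 1"
  have k: "1 \<le> k" "k < m" "k \<le> m" "Suc k = m" using two_le_m by (auto simp: k_def)
  have "c \<in> partial_product k <#> Gs k"
    using c partial_product_Suc[OF k(1,2)] partial_product_m k(4) by simp
  then obtain h x where hx: "h \<in> partial_product k" "x \<in> Gs k" "c = h \<otimes> x"
    unfolding set_mult_iff by blast
  have hc: "h \<in> carrier G" and xc: "x \<in> carrier G"
    using partial_product_in_carrier[OF k(3) hx(1)] factor_in_carrier[OF k(2) hx(2)] .
  have "x \<otimes> z = z \<otimes> x" if z: "z \<in> Gs k" for z
  proof -
    have zc: "z \<in> carrier G" using factor_in_carrier[OF k(2) z] .
    have "h \<otimes> (x \<otimes> z) = z \<otimes> c"
      using central[OF zc] hx(3) hc xc zc by (simp add: m_assoc)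
    also have "\<dots> = (z \<otimes> h) \<otimes> x" using hx(3) hc xc zc by (simp add: m_assoc)
    also have "\<dots> = h \<otimes> (z \<otimes> x)"
      using partial_product_commute[OF k(1,2) hx(1) z] hc xc zc by (simp add: m_assoc [symmetric])
    finally have "h \<otimes> (x \<otimes> z) = h \<otimes> (z \<otimes> x)" .
    then show ?thesis using hc xc zc by simp
  qed
  then have xZ: "x \<in> Z" using hx(2) center_factor[OF k(2)] by (auto simp: center_of_eq)
  have "h = c \<otimes> inv x" using hx(3) hc xc by (simp add: m_assoc)
  moreover have "g \<otimes> (c \<otimes> inv x) = (c \<otimes> inv x) \<otimes> g" if g: "g \<in> carrier G" for g
    using commute_mult_right[OF g c inv_closed[OF xc]] central[OF g]
      Z_central[OF subgroup.m_inv_closed[OF Z_subgroup xZ] g] by simp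
  ultimately have "h \<otimes> g = g \<otimes> h" if "g \<in> carrier G" for g
    using that by simp
  then have "h \<in> center_of G (partial_product k)"
    using hx(1) partial_product_in_carrier[OF k(3)] by (auto simp: center_of_eq)
  then have "h \<in> Z"
    using center_partial_product[OF k(1,2)] center_factor[OF k(2)] by simp
  then show ?thesis using hx(3) xZ subgroup.m_closed[OF Z_subgroup] by simp
qed

end

section \<open>An automorphism permuting the factors cyclically\<close>

locale cyclic_automorphism = extraspecial_central_product +
  fixes \<alpha> :: "'a \<Rightarrow> 'a"
  assumes coprime_m_p: "coprime m p"
    and alpha_iso: "\<alpha> \<in> iso G G"
    and alpha_pow_m: "x \<in> carrier G \<Longrightarrow> (\<alpha> ^^ m) x = x"
    and alpha_factor: "i < m \<Longrightarrow> \<alpha> ` Gs i = Gs (Suc i mod m)"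
    and derived_fixed: "derived G (carrier G) \<subseteq> fixed_points G \<alpha>"
begin

abbreviation N :: "'a set" where
  "N \<equiv> comm_aut G \<alpha>"

lemma alpha_hom: "\<alpha> \<in> hom G G"
  using alpha_iso by (rule iso_imp_homomorphism)

lemmas alpha_closed = endo_closed[OF alpha_hom]
  and alpha_funpow_closed = endo_funpow_closed[OF alpha_hom]
  and alpha_mult = endo_mult[OF alpha_hom]
  and N_subgroup = comm_aut_subgroup[OF alpha_hom]
  and N_normal = comm_aut_normal[OF alpha_hom]

lemma N_in_carrier: "n \<in> N \<Longrightarrow> n \<in> carrier G"
  by (rule subgroup.mem_carrier[OF N_subgroup])

lemma funpow_factor: "i < m \<Longrightarrow> (\<alpha> ^^ j) ` Gs i = Gs ((i + j) mod m)"
proof (induction j)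
  case (Suc j)
  have "(\<alpha> ^^ Suc j) ` Gs i = \<alpha> ` ((\<alpha> ^^ j) ` Gs i)"
    by (simp add: image_comp)
  also have "\<dots> = \<alpha> ` Gs ((i + j) mod m)"
    using Suc by simp
  also have "\<dots> = Gs ((i + Suc j) mod m)"
    using alpha_factor[of "(i + j) mod m"] two_le_m by (simp add: mod_Suc_eq)
  finally show ?case .
qed simp

lemma funpow_in_factor: "i < m \<Longrightarrow> x \<in> Gs i \<Longrightarrow> (\<alpha> ^^ j) x \<in> Gs ((i + j) mod m)"
  using funpow_factor by blast

lemma commute_alpha_orbit_prod:
  assumes x: "x \<in> Gs 0" and y: "y \<in> Gs 0"
  shows "k < m \<Longrightarrow> x \<otimes> \<alpha> (orbit_prod G \<alpha> y k) = \<alpha> (orbit_prod G \<alpha> y k) \<otimes> x"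
proof (induction k)
  case 0
  then show ?case using factor_in_carrier[OF _ x] endo_one[OF alpha_hom] by simp
next
  case (Suc k)
  have m0: "0 < m" and yc: "y \<in> carrier G" and xc: "x \<in> carrier G"
    using Suc.prems factor_in_carrier x y by auto
  have "(\<alpha> ^^ Suc k) y \<in> Gs (Suc k)" using funpow_in_factor[OF m0 y, of "Suc k"] Suc.prems by simp
  then have "x \<otimes> (\<alpha> ^^ Suc k) y = (\<alpha> ^^ Suc k) y \<otimes> x"
    using factors_commute[OF m0 Suc.prems] x by simp
  moreover have "\<alpha> (orbit_prod G \<alpha> y (Suc k)) = \<alpha> (orbit_prod G \<alpha> y k) \<otimes> (\<alpha> ^^ Suc k) y"
    using yc alpha_mult orbit_prod_closed[OF alpha_hom] alpha_funpow_closed by simp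
  ultimately show ?case
    using Suc commute_mult_right[OF xc] alpha_closed alpha_funpow_closed yc
      orbit_prod_closed[OF alpha_hom] by simp
qed

lemma orbit_prod_factor_eq:
  assumes y: "y \<in> Gs 0"
  shows "orbit_prod G \<alpha> y m = y \<otimes> \<alpha> (orbit_prod G \<alpha> y (m - 1))"
  using orbit_prod_Suc_left[OF alpha_hom factor_in_carrier[OF _ y], of "m - 1"] two_le_m by simp

lemma orbit_prod_factor_fixed:
  assumes y: "y \<in> Gs 0"
  shows "\<alpha> (orbit_prod G \<alpha> y m) = orbit_prod G \<alpha> y m"
proof (rule orbit_prod_fixed[OF alpha_hom])
  have m0: "0 < m" using two_le_m by simp
  show yc: "y \<in> carrier G" using factor_in_carrier[OF m0 y] .
  show "(\<alpha> ^^ m) y = y" using alpha_pow_m[OF yc] .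
  have "y \<otimes> \<alpha> (orbit_prod G \<alpha> y (m - 1)) = \<alpha> (orbit_prod G \<alpha> y (m - 1)) \<otimes> y"
    using commute_alpha_orbit_prod[OF y y] m0 by simp
  then show "y \<otimes> orbit_prod G \<alpha> y m = orbit_prod G \<alpha> y m \<otimes> y"
    unfolding orbit_prod_factor_eq[OF y]
    using commute_mult_right[OF yc yc] alpha_closed yc orbit_prod_closed[OF alpha_hom] by simp
qed

lemma N_Int_factor_subset_Z: "N \<inter> Gs 0 \<subseteq> Z"
proof
  fix x assume "x \<in> N \<inter> Gs 0"
  then have xN: "x \<in> N" and x: "x \<in> Gs 0" by auto
  have m0: "0 < m" using two_le_m by simp
  have xc: "x \<in> carrier G" using factor_in_carrier[OF m0 x] .
  have "x \<otimes> y = y \<otimes> x" if y: "y \<in> Gs 0" for y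
  proof -
    define T where "T = \<alpha> (orbit_prod G \<alpha> y (m - 1))"
    have yc: "y \<in> carrier G" and Tc: "T \<in> carrier G"
      using factor_in_carrier[OF m0 y] alpha_closed orbit_prod_closed[OF alpha_hom]
      by (auto simp: T_def)
    have xT: "x \<otimes> T = T \<otimes> x" using commute_alpha_orbit_prod[OF x y] m0 by (simp add: T_def)
    have "(y \<otimes> T) \<otimes> x = x \<otimes> (y \<otimes> T)"
      using fixed_commute_comm_aut[OF alpha_hom derived_fixed
          orbit_prod_closed[OF alpha_hom yc] orbit_prod_factor_fixed[OF y] xN]
      unfolding orbit_prod_factor_eq[OF y] T_def .
    then have "(y \<otimes> x) \<otimes> T = (x \<otimes> y) \<otimes> T"
      using xT xc yc Tc by (simp add: m_assoc)
    then show ?thesis using xc yc Tc by simp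
  qed
  then show "x \<in> Z" using x center_factor[OF m0] by (auto simp: center_of_eq)
qed

lemma Z_subset_N: "Z \<subseteq> N"
proof -
  have m0: "0 < m" and m1: "1 < m" using two_le_m by simp_all
  obtain x y where x: "x \<in> Gs 0" and y: "y \<in> Gs 0" and noncomm: "x \<otimes> y \<noteq> y \<otimes> x"
    using factor_not_commutative[OF m0] by blast
  have xc: "x \<in> carrier G" and yc: "y \<in> carrier G" and iyc: "inv y \<in> carrier G"
    using factor_in_carrier[OF m0] x y by auto
  have ax: "\<alpha> x \<in> Gs 1" using funpow_in_factor[OF m0 x, of 1] m1 by simp
  have axc: "\<alpha> x \<in> carrier G" using alpha_closed[OF xc] .
  define w where "w = inv x \<otimes> \<alpha> x"
  define v where "v = x \<otimes> inv y \<otimes> inv x"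
  have v: "v \<in> Gs 0" and vc: "v \<in> carrier G"
    using x y factor_subgroup[OF m0] xc yc
    by (auto simp: v_def subgroup.m_closed subgroup.m_inv_closed)
  have wN: "w \<in> N" using inv_mult_endo_in_comm_aut[OF alpha_hom xc] by (simp add: w_def)
  have "inv y \<otimes> w \<otimes> inv (inv y) \<in> N" using normal_invE(2)[OF N_normal iyc wN] .
  then have "inv w \<otimes> (inv y \<otimes> w \<otimes> y) \<in> N"
    using wN yc subgroup.m_closed[OF N_subgroup] subgroup.m_inv_closed[OF N_subgroup] by simp
  moreover have "inv w \<otimes> (inv y \<otimes> w \<otimes> y) = inv (\<alpha> x) \<otimes> (v \<otimes> \<alpha> x) \<otimes> y"
    using xc yc axc by (simp add: w_def v_def m_assoc inv_mult_group)
  moreover have "v \<otimes> \<alpha> x = \<alpha> x \<otimes> v" using factors_commute[OF m0 m1 _ v ax] by simp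
  ultimately have uN: "v \<otimes> y \<in> N" using vc yc axc by (simp add: m_assoc)
  have "v \<otimes> y \<in> Gs 0" using subgroup.m_closed[OF factor_subgroup[OF m0] v y] .
  then have uZ: "v \<otimes> y \<in> Z" using uN N_Int_factor_subset_Z by blast
  have "v \<otimes> y = commutator G x (inv y)" using xc yc by (simp add: v_def commutator_def)
  moreover have "x \<otimes> inv y \<noteq> inv y \<otimes> x"
    using noncomm commute_inv_right[OF xc iyc] yc by auto
  ultimately have "v \<otimes> y \<noteq> \<one>" using commutator_eq_one_iff[OF xc iyc] by simp
  then have "Z \<inter> N = Z"
    using subgroup_of_prime_card_eq[OF Z_subgroup card_Z prime_p
        subgroups_Inter_pair[OF Z_subgroup N_subgroup] Int_lower1] uZ uN by blast
  then show ?thesis by blast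
qed

lemma N_Int_factor: "N \<inter> Gs 0 = Z"
  using N_Int_factor_subset_Z Z_subset_N Z_subset_factor two_le_m by fastforce

lemma carrier_eq_N_set_mult_factor: "carrier G = N <#> Gs 0"
proof
  have m0: "0 < m" using two_le_m by simp
  have sub: "subgroup (N <#> Gs 0) G"
    by (rule mult_norm_subgroup[OF N_normal factor_subgroup[OF m0]])
  have "x \<in> N <#> Gs 0" if i: "i < m" and x: "x \<in> Gs i" for i x
  proof -
    define y where "y = (\<alpha> ^^ (m - i)) x"
    have xc: "x \<in> carrier G" and yc: "y \<in> carrier G"
      using factor_in_carrier[OF i x] alpha_funpow_closed by (auto simp: y_def)
    have "y \<in> Gs 0" using funpow_in_factor[OF i x, of "m - i"] i by (simp add: y_def)
    moreover have "x \<otimes> (inv x \<otimes> y) \<otimes> inv x \<in> N"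
      using normal_invE(2)[OF N_normal xc inv_mult_funpow_in_comm_aut[OF alpha_hom xc]]
      by (simp add: y_def)
    then have "inv (x \<otimes> (inv x \<otimes> y) \<otimes> inv x) \<in> N"
      by (rule subgroup.m_inv_closed[OF N_subgroup])
    moreover have "inv (x \<otimes> (inv x \<otimes> y) \<otimes> inv x) \<otimes> y = x"
      using xc yc by (simp add: inv_mult_group m_assoc)
    ultimately show ?thesis unfolding set_mult_iff by metis
  qed
  then have "(\<Union>i<m. Gs i) \<subseteq> N <#> Gs 0" by blast
  then show "carrier G \<subseteq> N <#> Gs 0"
    using generate_subgroup_incl[OF _ sub] generate_factors by metis
  show "N <#> Gs 0 \<subseteq> carrier G" using subgroup.subset[OF sub] .
qed

lemma card_carrier_N: "card (carrier G) * p = p ^ 3 * card N"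
  using card_set_mult_Int[OF finite_carrier N_subgroup factor_subgroup[of 0]] two_le_m
    carrier_eq_N_set_mult_factor N_Int_factor card_Z card_factor[of 0]
  by (simp add: mult.commute)

lemma card_N: "card N = p ^ (2 * m - 1)"
proof -
  have "p ^ 3 * p ^ (2 * m - 1) = p ^ (2 * m + 1) * p"
    using two_le_m by (simp flip: power_add power_Suc2)
  then show ?thesis
    using card_carrier_N card_carrier prime_gt_1_nat[OF prime_p] by simp
qed

lemma commute_factor_of_center_N:
  assumes c: "c \<in> N" and cN: "\<And>n. n \<in> N \<Longrightarrow> c \<otimes> n = n \<otimes> c" and y: "y \<in> Gs 0"
  shows "c \<otimes> y = y \<otimes> c"
proof -
  have m0: "0 < m" using two_le_m by simp
  have cc: "c \<in> carrier G" and yc: "y \<in> carrier G"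
    using N_in_carrier[OF c] factor_in_carrier[OF m0 y] .
  define \<kappa> where "\<kappa> = commutator G c"
  have \<kappa>_closed: "\<kappa> g \<in> carrier G" and \<kappa>_Z: "\<kappa> g \<in> Z" if "g \<in> carrier G" for g
    using that cc commutator_in_Z by (simp_all add: \<kappa>_def)
  have \<kappa>_mult: "\<kappa> (a \<otimes> b) = \<kappa> a \<otimes> \<kappa> b" if a: "a \<in> carrier G" and b: "b \<in> carrier G" for a b
  proof -
    have "a \<otimes> \<kappa> b = \<kappa> b \<otimes> a" using Z_central[OF \<kappa>_Z[OF b] a] by simp
    then have "a \<otimes> \<kappa> b \<otimes> inv a = \<kappa> b" using a \<kappa>_closed[OF b] by (simp add: m_assoc)
    then show ?thesis using commutator_mult_right[OF cc a b] by (simp add: \<kappa>_def)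
  qed
  have \<kappa>_invariant: "\<kappa> (\<alpha> g) = \<kappa> g" if g: "g \<in> carrier G" for g
  proof -
    have n: "inv g \<otimes> \<alpha> g \<in> N" using inv_mult_endo_in_comm_aut[OF alpha_hom g] .
    have "\<kappa> (inv g \<otimes> \<alpha> g) = \<one>"
      using cN[OF n] commutator_eq_one_iff[OF cc N_in_carrier[OF n]] by (simp add: \<kappa>_def)
    moreover have "\<alpha> g = g \<otimes> (inv g \<otimes> \<alpha> g)" using g alpha_closed by simp
    ultimately show ?thesis using \<kappa>_mult[OF g N_in_carrier[OF n]] \<kappa>_closed[OF g] by simp
  qed
  have "orbit_prod G \<alpha> y m \<otimes> c = c \<otimes> orbit_prod G \<alpha> y m"
    using fixed_commute_comm_aut[OF alpha_hom derived_fixed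
        orbit_prod_closed[OF alpha_hom yc] orbit_prod_factor_fixed[OF y] c] .
  then have "\<kappa> (orbit_prod G \<alpha> y m) = \<one>"
    using commutator_eq_one_iff[OF cc orbit_prod_closed[OF alpha_hom yc]] by (simp add: \<kappa>_def)
  then have "\<kappa> y [^] m = \<one>"
    using orbit_prod_invariant_hom[OF alpha_hom yc \<kappa>_closed \<kappa>_mult \<kappa>_invariant] by simp
  then have "\<kappa> y = \<one>"
    using eq_one_of_pow_coprime[OF Z_subgroup card_Z prime_p \<kappa>_Z[OF yc] _ coprime_m_p] by simp
  then show ?thesis using commutator_eq_one_iff[OF cc yc] by (simp add: \<kappa>_def)
qed

lemma center_N: "center_of G N = Z"
proof
  show "Z \<subseteq> center_of G N"
    using Z_subset_N Z_central N_in_carrier by (auto simp: center_of_eq)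
  show "center_of G N \<subseteq> Z"
  proof
    fix c assume "c \<in> center_of G N"
    then have c: "c \<in> N" and cN: "\<And>n. n \<in> N \<Longrightarrow> c \<otimes> n = n \<otimes> c"
      by (auto simp: center_of_eq)
    have cc: "c \<in> carrier G" using N_in_carrier[OF c] .
    have "c \<otimes> g = g \<otimes> c" if g: "g \<in> carrier G" for g
    proof -
      have "g \<in> N <#> Gs 0" using g carrier_eq_N_set_mult_factor by simp
      then obtain n y where ny: "n \<in> N" "y \<in> Gs 0" "g = n \<otimes> y"
        unfolding set_mult_iff by blast
      then show ?thesis
        using commute_mult_right[OF cc] cN commute_factor_of_center_N[OF c cN] N_in_carrier
          factor_in_carrier[of 0] two_le_m by simp
    qed
    then show "c \<in> Z" using central_in_Z[OF cc] by blast
  qed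
qed

lemma N_not_commutative: "\<exists>a\<in>N. \<exists>b\<in>N. a \<otimes> b \<noteq> b \<otimes> a"
proof (rule ccontr)
  assume "\<not> ?thesis"
  then have "N \<subseteq> Z" using center_N by (auto simp: center_of_eq)
  then have "card N \<le> p"
    using card_Z card_mono finite_subset[OF _ finite_carrier] subgroup.subset[OF Z_subgroup] by metis
  moreover have "p ^ 1 < p ^ (2 * m - 1)"
    using prime_gt_1_nat[OF prime_p] two_le_m by (intro power_strict_increasing) simp_all
  ultimately show False using card_N by simp
qed

lemma derived_N: "derived G N = Z"
proof -
  have sub: "derived G N \<subseteq> Z"
    using derived_subset_subgroup[OF Z_subgroup] commutator_in_Z N_in_carrier by blast
  obtain a b where ab: "a \<in> N" "b \<in> N" "a \<otimes> b \<noteq> b \<otimes> a" using N_not_commutative by blast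
  then have "commutator G a b \<noteq> \<one>" using commutator_eq_one_iff N_in_carrier by simp
  then show ?thesis
    using subgroup_of_prime_card_eq[OF Z_subgroup card_Z prime_p
        derived_is_subgroup[OF subgroup.subset[OF N_subgroup]] sub commutator_in_derived[OF ab(1,2)]]
    by simp
qed

lemma extra_special_N: "extra_special p (G\<lparr>carrier := N\<rparr>)"
  unfolding extra_special_def
  using subgroup_imp_group[OF N_subgroup] finite_subset[OF subgroup.subset[OF N_subgroup] finite_carrier]
    card_N derived_consistent[OF subset_refl N_subgroup] derived_N center_N card_Z
  by auto

lemma card_carrier_eq_card_N: "card (carrier G) = p ^ 2 * card N"
  using card_carrier_N prime_gt_1_nat[OF prime_p] by (simp add: power2_eq_square power3_eq_cube)

end

theorem lemma2p5:
  fixes G (structure) and Gs :: "nat \<Rightarrow> 'a set" and \<alpha> :: "'a \<Rightarrow> 'a" and m p :: nat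
  assumes "group G" and "finite (carrier G)"
    and "m \<ge> 2" and "Factorial_Ring.prime p" and "coprime m p"
    and "iterated_central_product G Gs m"
    and "\<forall>i<m. extra_special p (G\<lparr>carrier := Gs i\<rparr>) \<and> card (Gs i) = p ^ 3"
    and "\<forall>i<m. \<forall>j<m. G\<lparr>carrier := Gs i\<rparr> \<cong> G\<lparr>carrier := Gs j\<rparr>"
    and "\<alpha> \<in> iso G G"
    and "aut_order_is G \<alpha> m"
    and "\<forall>i<m. \<alpha> ` (Gs i) = Gs (Suc i mod m)"
    and "derived G (carrier G) \<subseteq> fixed_points G \<alpha>"
  shows "extra_special p (G\<lparr>carrier := comm_aut G \<alpha>\<rparr>)
         \<and> card (carrier G) = p ^ 2 * card (comm_aut G \<alpha>)"
proof -
  interpret cyclic_automorphism G Gs m p \<alpha>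
    by (intro cyclic_automorphism.intro extraspecial_central_product.intro
        extraspecial_central_product_axioms.intro cyclic_automorphism_axioms.intro)
      (use assms in \<open>auto simp: aut_order_is_def\<close>)
  show ?thesis using extra_special_N card_carrier_eq_card_N by simp
qed

end
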